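(* Consider the CoDGraD iteration described below, and assume that ${\bf A}_{\rm sde}$ has $1$ as a simple eigenvalue and all its other eigenvalues lie in the open unit complex disk, and that there is $M>0$ with $\|\nabla g_i({\bf x})\|_2\le M$ for all ${\bf x}\in\mathbb{R}^N$, $1\le i\le n$. Then there exists a positive constant $C_1$ such that for all $k\ge1$, $$\max_{1\le i\le n}\|{\bf x}_i(k)-\bar{\bf x}(k)\|_2\le C_1M\sum_{l=0}^{k-1}\Big(\tfrac{1+|\lambda_2({\bf A}_{\rm sde})|}{2}\Big)^{k-l}\alpha_l+C_1\Big(\tfrac{1+|\lambda_2({\bf A}_{\rm sde})|}{2}\Big)^{k}\max_{1\le i\le n}\|{\bf x}_i(0)-\bar{\bf x}(0)\|_2.$$
   Context: Setting: $f_1,\dots,f_m:\mathbb{R}^N\to\mathbb{R}$, $f=\sum_l f_l$; ${\bf B}=(b(i,l))$ real $n\times m$, ${\bf A}=(a(i,j))$ real $n\times n$ with ${\bf A}{\bf B}={\bf 1}_{n\times m}$; $g_i=\sum_l b(i,l)f_l$ differentiable. Let $t_+=\max(t,0)$, $w_i=\big(\sum_j|a(i,j)|\big)^{-1}$, $\tilde a(i,j)=w_ia(i,j)$, $\tilde{\bf A}_\pm=\big((\pm\tilde a(i,j))_+\big)$, ${\bf A}_{\rm sde}=\begin{pmatrix}\tilde{\bf A}_+&\tilde{\bf A}_-\\ \tilde{\bf A}_+&\tilde{\bf A}_-\end{pmatrix}$ (row stochastic, $2n\times2n$). CoDGraD iteration: positive step sizes $\alpha_k$, arbitrary ${\bf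 x}_i(0)\in\mathbb{R}^N$, and for $k\ge0$: ${\bf y}_i^\pm(k)={\bf x}_i(k)\mp\alpha_k\nabla g_i({\bf x}_i(k))$, ${\bf x}_i(k+1)=\sum_{j=1}^n w_i\{(a(i,j))_+{\bf y}_j^+(k)+(-a(i,j))_+{\bf y}_j^-(k)\}$. Under the spectral assumption, let ${\bf a}_{\rm sde}=(a_1,\dots,a_{2n})^T$ be the unique vector with ${\bf a}_{\rm sde}^T{\bf A}_{\rm sde}={\bf a}_{\rm sde}^T$ and $\sum_{i=1}^{2n}a_i=1$, and set $\bar{\bf x}(k)=\sum_{i=1}^n(a_i+a_{n+i}){\bf x}_i(k)$. The eigenvalues of ${\bf A}_{\rm sde}$ are ordered $1=\lambda_1>|\lambda_2({\bf A}_{\rm sde})|\ge\cdots\ge|\lambda_{2n}({\bf A}_{\rm sde})|$. *)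

theory Defs
  imports "HOL-Analysis.Analysis" "Jordan_Normal_Form.Char_Poly"
begin

text \<open>Matrices are rendered as functions nat => nat => real with explicit
  index bounds (indices start at 0).\<close>

definition pospart :: "real \<Rightarrow> real" where
  "pospart t = max t 0"

definition codgrad_w :: "nat \<Rightarrow> (nat \<Rightarrow> nat \<Rightarrow> real) \<Rightarrow> nat \<Rightarrow> real" where
  "codgrad_w n A i = inverse (\<Sum>j<n. \<bar>A i j\<bar>)"

text \<open>The 2n x 2n matrix A_sde = [[A+, A-],[A+, A-]] with entries
  (+- w_i a(i,j))_+ .\<close>
definition A_sde :: "nat \<Rightarrow> (nat \<Rightarrow> nat \<Rightarrow> real) \<Rightarrow> nat \<Rightarrow> nat \<Rightarrow> real" where
  "A_sde n A p q =
     (let i = p mod n in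
      if q < n then pospart (codgrad_w n A i * A i q)
      else pospart (- (codgrad_w n A i * A i (q - n))))"

definition A_sde_cmat :: "nat \<Rightarrow> (nat \<Rightarrow> nat \<Rightarrow> real) \<Rightarrow> complex mat" where
  "A_sde_cmat n A = Matrix.mat (2*n) (2*n) (\<lambda>(p,q). complex_of_real (A_sde n A p q))"

text \<open>Modulus of the second eigenvalue (in the ordering by modulus, counted
  with multiplicity): under the spectral assumption (1 is a simple eigenvalue),
  it equals the largest modulus of an eigenvalue different from 1.\<close>
definition abs_lambda2 :: "nat \<Rightarrow> (nat \<Rightarrow> nat \<Rightarrow> real) \<Rightarrow> real" where
  "abs_lambda2 n A = Max {cmod z | z. poly (char_poly (A_sde_cmat n A)) z = 0 \<and> z \<noteq> 1}"

end

theory Submission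
  imports Defs "Jordan_Normal_Form.Spectral_Radius"
begin

(* Splitting every agent into a descent copy y_i^+ and an ascent copy y_i^-, CoDGraD becomes
   the consensus iteration X(k+1) = A_sde (X(k) + alpha_k d(k)) on 2n lifted states with drifts
   bounded by M.  Since A_sde is row stochastic with left eigenvector a_sde, the deviations
   X(k) - xbar(k) evolve under the rank-one deflation A_sde - 1 a_sde^T, whose characteristic
   polynomial is that of A_sde with the simple factor z - 1 replaced by z.  Its spectral radius
   is thus |lambda_2| < rho = (1 + |lambda_2|)/2, the Jordan normal form bounds its k-th power
   by C rho^k, and unrolling the recursion gives the estimate. *)

section \<open>Powers of matrices given by their entries\<close>

fun mpow :: "nat \<Rightarrow> (nat \<Rightarrow> nat \<Rightarrow> real) \<Rightarrow> nat \<Rightarrow> nat \<Rightarrow> nat \<Rightarrow> real" where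
  "mpow N G 0 p q = (if p = q then 1 else 0)"
| "mpow N G (Suc k) p q = (\<Sum>r<N. mpow N G k p r * G r q)"

lemma mpow_Suc_left:
  assumes "p < N" "q < N"
  shows "mpow N G (Suc k) p q = (\<Sum>r<N. G p r * mpow N G k r q)"
  using assms(2)
proof (induction k arbitrary: q)
  case 0
  then show ?case using assms(1) by (simp add: of_bool_def[symmetric])
next
  case (Suc k)
  have "mpow N G (Suc (Suc k)) p q = (\<Sum>r<N. \<Sum>s<N. G p s * (mpow N G k s r * G r q))"
    using Suc.IH by (simp add: sum_distrib_right mult.assoc)
  also have "\<dots> = (\<Sum>s<N. \<Sum>r<N. G p s * (mpow N G k s r * G r q))"
    by (rule sum.swap)
  finally show ?case by (simp add: sum_distrib_left)
qed

lemma mpow_Suc_0: "p < N \<Longrightarrow> mpow N G (Suc 0) p q = G p q"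
  by (simp add: of_bool_def[symmetric])

lemma sum_mpow_0_scaleR:
  fixes v :: "nat \<Rightarrow> 'a::real_vector"
  assumes "p < N"
  shows "(\<Sum>q<N. mpow N G 0 p q *\<^sub>R v q) = v p"
  using assms by (simp add: if_distrib[of "\<lambda>c. c *\<^sub>R _"] cong: if_cong)

lemma sum_mpow_Suc_scaleR:
  fixes v :: "nat \<Rightarrow> 'a::real_vector"
  assumes "p < N"
  shows "(\<Sum>q<N. G p q *\<^sub>R (\<Sum>r<N. mpow N G j q r *\<^sub>R v r)) = (\<Sum>r<N. mpow N G (Suc j) p r *\<^sub>R v r)"
proof -
  have "(\<Sum>q<N. G p q *\<^sub>R (\<Sum>r<N. mpow N G j q r *\<^sub>R v r))
      = (\<Sum>q<N. \<Sum>r<N. (G p q * mpow N G j q r) *\<^sub>R v r)"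
    by (simp add: scaleR_sum_right)
  also have "\<dots> = (\<Sum>r<N. (\<Sum>q<N. G p q * mpow N G j q r) *\<^sub>R v r)"
    by (subst sum.swap) (simp add: scaleR_sum_left)
  also have "\<dots> = (\<Sum>r<N. mpow N G (Suc j) p r *\<^sub>R v r)"
  proof (intro sum.cong refl)
    fix r assume "r \<in> {..<N}"
    then show "(\<Sum>q<N. G p q * mpow N G j q r) *\<^sub>R v r = mpow N G (Suc j) p r *\<^sub>R v r"
      using mpow_Suc_left[OF assms, of r G j] by simp
  qed
  finally show ?thesis .
qed

lemma linear_recursion_unroll:
  fixes y v :: "nat \<Rightarrow> nat \<Rightarrow> 'a::real_vector"
  assumes rec: "\<And>k p. p < N \<Longrightarrow> y (Suc k) p = (\<Sum>q<N. G p q *\<^sub>R (y k q + v k q))"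
    and p: "p < N"
  shows "y k p = (\<Sum>q<N. mpow N G k p q *\<^sub>R y 0 q)
                 + (\<Sum>l<k. \<Sum>q<N. mpow N G (k - l) p q *\<^sub>R v l q)"
  using p
proof (induction k arbitrary: p)
  case 0
  then show ?case using sum_mpow_0_scaleR[OF 0, of G "y 0"] by simp
next
  case (Suc k)
  have "y (Suc k) p = (\<Sum>q<N. G p q *\<^sub>R (\<Sum>r<N. mpow N G k q r *\<^sub>R y 0 r))
      + (\<Sum>l<k. \<Sum>q<N. G p q *\<^sub>R (\<Sum>r<N. mpow N G (k - l) q r *\<^sub>R v l r))
      + (\<Sum>q<N. G p q *\<^sub>R v k q)"
    using rec[OF Suc.prems] Suc.IH
    by (simp add: scaleR_add_right sum.distrib scaleR_sum_right
                  sum.swap[where B="{..<k}"])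
  also have "\<dots> = (\<Sum>q<N. mpow N G (Suc k) p q *\<^sub>R y 0 q)
      + (\<Sum>l<k. \<Sum>q<N. mpow N G (Suc k - l) p q *\<^sub>R v l q)
      + (\<Sum>q<N. mpow N G (Suc k - k) p q *\<^sub>R v k q)"
    using Suc.prems by (simp add: sum_mpow_Suc_scaleR Suc_diff_le mpow_Suc_0 del: mpow.simps)
  finally show ?case by simp
qed

lemma norm_sum_mpow_scaleR_le:
  fixes u :: "nat \<Rightarrow> 'a::real_normed_vector"
  assumes G_pow: "\<And>q. q < N \<Longrightarrow> \<bar>mpow N G k p q\<bar> \<le> K"
    and u: "\<And>q. q < N \<Longrightarrow> norm (u q) \<le> b"
  shows "norm (\<Sum>q<N. mpow N G k p q *\<^sub>R u q) \<le> N * K * b"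
proof -
  have "norm (\<Sum>q<N. mpow N G k p q *\<^sub>R u q) \<le> (\<Sum>q<N. \<bar>mpow N G k p q\<bar> * norm (u q))"
    by (rule order_trans[OF norm_sum]) simp
  also have "\<dots> \<le> (\<Sum>q<N. K * b)"
    using G_pow u by (intro sum_mono mult_mono) (auto intro: order_trans[OF abs_ge_zero])
  finally show ?thesis by simp
qed

lemma linear_recursion_norm_bound:
  fixes y v :: "nat \<Rightarrow> nat \<Rightarrow> 'a::real_normed_vector"
  assumes rec: "\<And>k p. p < N \<Longrightarrow> y (Suc k) p = (\<Sum>q<N. G p q *\<^sub>R (y k q + v k q))"
    and G_pow: "\<And>k p q. p < N \<Longrightarrow> q < N \<Longrightarrow> \<bar>mpow N G k p q\<bar> \<le> K * \<rho> ^ k"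
    and v: "\<And>l q. q < N \<Longrightarrow> norm (v l q) \<le> b l"
    and y0: "\<And>q. q < N \<Longrightarrow> norm (y 0 q) \<le> c"
    and p: "p < N"
  shows "norm (y k p) \<le> N * K * (\<rho> ^ k * c + (\<Sum>l<k. \<rho> ^ (k - l) * b l))"
proof -
  have unroll: "y k p = (\<Sum>q<N. mpow N G k p q *\<^sub>R y 0 q)
      + (\<Sum>l<k. \<Sum>q<N. mpow N G (k - l) p q *\<^sub>R v l q)"
    using rec p by (rule linear_recursion_unroll)
  have "norm (y k p) \<le> norm (\<Sum>q<N. mpow N G k p q *\<^sub>R y 0 q)
      + (\<Sum>l<k. norm (\<Sum>q<N. mpow N G (k - l) p q *\<^sub>R v l q))"
    unfolding unroll by (rule order_trans[OF norm_triangle_ineq add_left_mono[OF norm_sum]])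
  also have "\<dots> \<le> N * (K * \<rho> ^ k) * c + (\<Sum>l<k. N * (K * \<rho> ^ (k - l)) * b l)"
    using G_pow[OF p] v y0 by (intro add_mono sum_mono norm_sum_mpow_scaleR_le) auto
  finally show ?thesis
    by (simp add: algebra_simps sum_distrib_left)
qed

lemma stochastic_step_deviation:
  fixes Y :: "nat \<Rightarrow> 'a::real_vector"
  assumes row: "(\<Sum>q<N. G p q) = 1"
    and left: "\<And>q. q < N \<Longrightarrow> (\<Sum>r<N. a r * G r q) = a q"
    and a_sum: "(\<Sum>q<N. a q) = 1"
  shows "(\<Sum>q<N. G p q *\<^sub>R Y q) - (\<Sum>r<N. a r *\<^sub>R (\<Sum>q<N. G r q *\<^sub>R Y q))
       = (\<Sum>q<N. (G p q - a q) *\<^sub>R (Y q - c))"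
proof -
  have "(\<Sum>r<N. a r *\<^sub>R (\<Sum>q<N. G r q *\<^sub>R Y q)) = (\<Sum>r<N. \<Sum>q<N. (a r * G r q) *\<^sub>R Y q)"
    by (simp add: scaleR_sum_right)
  also have "\<dots> = (\<Sum>q<N. (\<Sum>r<N. a r * G r q) *\<^sub>R Y q)"
    by (subst sum.swap) (simp add: scaleR_sum_left)
  also have "\<dots> = (\<Sum>q<N. a q *\<^sub>R Y q)"
    using left by (intro sum.cong) auto
  finally have avg: "(\<Sum>r<N. a r *\<^sub>R (\<Sum>q<N. G r q *\<^sub>R Y q)) = (\<Sum>q<N. a q *\<^sub>R Y q)" .
  have "(\<Sum>q<N. (G p q - a q) *\<^sub>R (Y q - c))
      = (\<Sum>q<N. G p q *\<^sub>R Y q) - (\<Sum>q<N. a q *\<^sub>R Y q) - (\<Sum>q<N. G p q - a q) *\<^sub>R c"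
    by (simp add: scaleR_diff_left scaleR_diff_right sum_subtractf scaleR_sum_left)
  then show ?thesis
    using row a_sum avg by (simp add: sum_subtractf)
qed

section \<open>Exponential decay of matrix powers\<close>

definition cmat :: "nat \<Rightarrow> (nat \<Rightarrow> nat \<Rightarrow> real) \<Rightarrow> complex mat" where
  "cmat N G = Matrix.mat N N (\<lambda>(p,q). complex_of_real (G p q))"

lemma cmat_carrier [simp]: "cmat N G \<in> carrier_mat N N"
  by (simp add: cmat_def)

lemma cmat_dim [simp]: "dim_row (cmat N G) = N" "dim_col (cmat N G) = N"
  by (simp_all add: cmat_def)

lemma cmat_index [simp]: "p < N \<Longrightarrow> q < N \<Longrightarrow> cmat N G $$ (p,q) = complex_of_real (G p q)"
  by (simp add: cmat_def)

lemma cmat_pow_index: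
  assumes "p < N" "q < N"
  shows "(cmat N G ^\<^sub>m k) $$ (p,q) = complex_of_real (mpow N G k p q)"
  using assms(2)
proof (induction k arbitrary: q)
  case 0
  then show ?case using assms(1) by simp
next
  case (Suc k)
  have "(cmat N G ^\<^sub>m Suc k) $$ (p,q) = (\<Sum>r<N. (cmat N G ^\<^sub>m k) $$ (p,r) * cmat N G $$ (r,q))"
    using Suc.prems assms(1) by (simp add: scalar_prod_def atLeast0LessThan)
  also have "\<dots> = complex_of_real (mpow N G (Suc k) p q)"
    using Suc by simp
  finally show ?case .
qed

lemma pow_mat_smult:
  fixes A :: "'a::comm_ring_1 mat"
  assumes A: "A \<in> carrier_mat n n"
  shows "(c \<cdot>\<^sub>m A) ^\<^sub>m k = c ^ k \<cdot>\<^sub>m A ^\<^sub>m k"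
proof (induction k)
  case 0
  then show ?case by (auto intro!: eq_matI)
next
  case (Suc k)
  have "(c \<cdot>\<^sub>m A) ^\<^sub>m Suc k = (c ^ k \<cdot>\<^sub>m A ^\<^sub>m k) * (c \<cdot>\<^sub>m A)"
    using Suc by simp
  also have "\<dots> = c ^ k \<cdot>\<^sub>m (A ^\<^sub>m k * (c \<cdot>\<^sub>m A))"
    by (rule mult_smult_assoc_mat) (use A in auto)
  also have "\<dots> = c ^ Suc k \<cdot>\<^sub>m A ^\<^sub>m Suc k"
    using A by (auto simp: mult_smult_distrib[of _ n n] intro!: eq_matI)
  finally show ?case .
qed

lemma char_poly_nonzero:
  assumes "A \<in> carrier_mat n n"
  shows "char_poly A \<noteq> 0"
  using degree_monic_char_poly[OF assms] by auto

lemma eigenvalue_smult_mat: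
  fixes A :: "complex mat"
  assumes A: "A \<in> carrier_mat n n" and c: "c \<noteq> 0"
    and ev: "eigenvalue (c \<cdot>\<^sub>m A) \<mu>"
  shows "eigenvalue A (\<mu> / c)"
proof -
  have cA: "c \<cdot>\<^sub>m A \<in> carrier_mat n n" using A by simp
  have "poly (char_poly (c \<cdot>\<^sub>m A)) \<mu> = 0"
    using ev eigenvalue_root_char_poly[OF cA] by simp
  then have "order \<mu> (char_poly (c \<cdot>\<^sub>m A)) \<noteq> 0"
    using char_poly_nonzero[OF cA] by (simp add: order_root)
  then have "poly (char_poly A) (\<mu> / c) = 0"
    unfolding order_char_poly_smult[OF A c] by (simp add: order_root)
  then show ?thesis using eigenvalue_root_char_poly[OF A] by simp
qed

(* Scaled by 1/rho, A has spectral radius below 1, where the Jordan normal form bounds its powers. *)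
lemma pow_mat_norm_bound:
  fixes A :: "complex mat"
  assumes A: "A \<in> carrier_mat n n" and \<rho>: "\<rho> > 0"
    and ev: "\<And>\<mu>. eigenvalue A \<mu> \<Longrightarrow> cmod \<mu> < \<rho>"
  shows "\<exists>c. \<forall>k. norm_bound (A ^\<^sub>m k) (c * \<rho> ^ k)"
proof (cases "n = 0")
  case True
  then show ?thesis using A by (auto simp: norm_bound_def)
next
  case False
  define H where "H = complex_of_real (1 / \<rho>) \<cdot>\<^sub>m A"
  have H: "H \<in> carrier_mat n n" using A by (simp add: H_def)
  have "cmod \<mu> < 1" if "eigenvalue H \<mu>" for \<mu>
    using ev[OF eigenvalue_smult_mat[OF A _ that[unfolded H_def]]] \<rho>
    by (simp add: norm_mult abs_of_pos mult_less_cancel_left2 mult_less_cancel_right2)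
  then have "spectral_radius H < 1"
    using spectral_radius_mem_max(1)[OF H] False unfolding spectrum_def by auto
  moreover obtain as where "char_poly H = (\<Prod>a\<leftarrow>as. [:- a, 1:])"
    using char_poly_factorized[OF H] by auto
  ultimately obtain c where c: "\<And>k. norm_bound (H ^\<^sub>m k) c"
    using spectral_radius_jnf_norm_bound_less_1[OF H] jordan_nf_exists[OF H] by blast
  have "norm_bound (A ^\<^sub>m k) (c * \<rho> ^ k)" for k
    unfolding norm_bound_def
  proof (intro allI impI)
    fix i j assume ij: "i < dim_row (A ^\<^sub>m k)" "j < dim_col (A ^\<^sub>m k)"
    have "(1 / \<rho>) ^ k * norm ((A ^\<^sub>m k) $$ (i, j)) \<le> c"
      using c[of k] ij A \<rho> unfolding H_def pow_mat_smult[OF A] norm_bound_def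
      by (auto simp: norm_mult norm_power norm_divide carrier_matD)
    then show "norm ((A ^\<^sub>m k) $$ (i, j)) \<le> c * \<rho> ^ k"
      using \<rho> by (simp add: field_simps)
  qed
  then show ?thesis by blast
qed

lemma mpow_exp_bound:
  assumes \<rho>: "\<rho> > 0"
    and ev: "\<And>\<mu>. eigenvalue (cmat N G) \<mu> \<Longrightarrow> cmod \<mu> < \<rho>"
  obtains K where "\<And>k p q. p < N \<Longrightarrow> q < N \<Longrightarrow> \<bar>mpow N G k p q\<bar> \<le> K * \<rho> ^ k"
proof -
  obtain K where K: "\<And>k. norm_bound (cmat N G ^\<^sub>m k) (K * \<rho> ^ k)"
    using pow_mat_norm_bound[OF cmat_carrier \<rho> ev] by blast
  show ?thesis
  proof
    fix k p q assume pq: "p < N" "q < N"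
    then have "cmod ((cmat N G ^\<^sub>m k) $$ (p,q)) \<le> K * \<rho> ^ k"
      using K[of k] unfolding norm_bound_def by simp
    then show "\<bar>mpow N G k p q\<bar> \<le> K * \<rho> ^ k"
      by (simp add: cmat_pow_index[OF pq])
  qed
qed

section \<open>Rank-one deflation of a stochastic matrix\<close>

definition add_row0_mat :: "nat \<Rightarrow> 'a::comm_ring_1 \<Rightarrow> 'a mat" where
  "add_row0_mat N c =
     Matrix.mat N N (\<lambda>(i,j). (if i = j then 1 else 0) + (if j = 0 \<and> i \<noteq> 0 then c else 0))"

lemma add_row0_mat_carrier [simp]: "add_row0_mat N c \<in> carrier_mat N N"
  by (simp add: add_row0_mat_def)

lemma add_row0_mat_dim [simp]: "dim_row (add_row0_mat N c) = N" "dim_col (add_row0_mat N c) = N"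
  by (simp_all add: add_row0_mat_def)

lemma add_row0_mat_mult_index:
  assumes "dim_row M = N" "i < N" "j < dim_col M"
  shows "(add_row0_mat N c * M) $$ (i,j) = M $$ (i,j) + (if i \<noteq> 0 then c * M $$ (0,j) else 0)"
  using assms
  by (simp add: add_row0_mat_def scalar_prod_def atLeast0LessThan distrib_right sum.distrib
      of_bool_def[symmetric] if_distrib[of "\<lambda>x. x * _"] cong: if_cong)

lemma mult_add_row0_mat_col0:
  assumes "dim_col M = N" "i < dim_row M" "0 < N"
  shows "(M * add_row0_mat N 1) $$ (i,0) = (\<Sum>r<N. M $$ (i,r))"
proof -
  have "(M * add_row0_mat N 1) $$ (i,0) = (\<Sum>r<N. M $$ (i,r) * add_row0_mat N 1 $$ (r,0))"
    using assms by (simp add: scalar_prod_def atLeast0LessThan)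
  also have "\<dots> = (\<Sum>r<N. M $$ (i,r))"
    by (intro sum.cong) (auto simp: add_row0_mat_def)
  finally show ?thesis .
qed

lemma add_row0_mat_cancel:
  assumes "M \<in> carrier_mat N nc"
  shows "add_row0_mat N c * (add_row0_mat N (- c) * M) = M"
proof (rule eq_matI)
  fix i j assume ij: "i < dim_row M" "j < dim_col M"
  have "0 < N" using ij assms by auto
  with ij show "(add_row0_mat N c * (add_row0_mat N (- c) * M)) $$ (i,j) = M $$ (i,j)"
    using carrier_matD[OF assms]
    by (simp add: add_row0_mat_mult_index algebra_simps del: index_mult_mat(1))
qed (use assms in auto)

lemma similar_mat_add_row0:
  fixes X :: "'a::comm_ring_1 mat"
  assumes X: "X \<in> carrier_mat N N"
  shows "similar_mat X (add_row0_mat N (- c) * X * add_row0_mat N c)"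
proof (rule similar_matI)
  let ?P = "add_row0_mat N c" and ?Q = "add_row0_mat N (- c)"
  have PQ: "?P * ?Q = 1\<^sub>m N" using add_row0_mat_cancel[of "1\<^sub>m N" N N c] by simp
  show "?P * ?Q = 1\<^sub>m N" by (rule PQ)
  show "?Q * ?P = 1\<^sub>m N" using add_row0_mat_cancel[of "1\<^sub>m N" N N "- c"] by simp
  show "{X, ?Q * X * ?P, ?P, ?Q} \<subseteq> carrier_mat N N" using X by auto
  have "?P * (?Q * X * ?P) * ?Q = ?P * (?Q * X * ?P * ?Q)"
    by (rule assoc_mult_mat) (use X in auto)
  also have "?Q * X * ?P * ?Q = ?Q * X * (?P * ?Q)"
    by (rule assoc_mult_mat) (use X in auto)
  also have "?P * (?Q * X * (?P * ?Q)) = X"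
    using X add_row0_mat_cancel[of X N N c] by (simp add: PQ assoc_mult_mat[of _ N N _ N _ N])
  finally show "X = ?P * (?Q * X * ?P) * ?Q" ..
qed

lemma char_poly_first_col:
  fixes X :: "'a::comm_ring_1 mat"
  assumes X: "X \<in> carrier_mat (Suc N) (Suc N)"
    and col: "\<And>i. 0 < i \<Longrightarrow> i < Suc N \<Longrightarrow> X $$ (i,0) = 0"
  shows "char_poly X = [:- X $$ (0,0), 1:] * char_poly (Matrix.mat N N (\<lambda>(i,j). X $$ (Suc i, Suc j)))"
proof -
  let ?X1 = "Matrix.mat 1 1 (\<lambda>_. X $$ (0,0))"
  let ?X2 = "Matrix.mat 1 N (\<lambda>(_,j). X $$ (0, Suc j))"
  let ?D = "Matrix.mat N N (\<lambda>(i,j). X $$ (Suc i, Suc j))"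
  have blocks: "X = four_block_mat ?X1 ?X2 (0\<^sub>m N 1) ?D"
  proof (rule eq_matI)
    fix i j assume "i < dim_row (four_block_mat ?X1 ?X2 (0\<^sub>m N 1) ?D)"
      "j < dim_col (four_block_mat ?X1 ?X2 (0\<^sub>m N 1) ?D)"
    then show "X $$ (i,j) = four_block_mat ?X1 ?X2 (0\<^sub>m N 1) ?D $$ (i,j)"
      using col by (cases i; cases j) auto
  qed (use X in auto)
  have "char_poly (four_block_mat ?X1 ?X2 (0\<^sub>m N 1) ?D) = char_poly ?X1 * char_poly ?D"
    by (rule char_poly_four_block_zeros_col) auto
  then have "char_poly X = char_poly ?X1 * char_poly ?D"
    by (simp only: blocks[symmetric])
  moreover have "char_poly ?X1 = [:- X $$ (0,0), 1:]"
    by (subst char_poly_upper_triangular[of _ 1]) (auto simp: upper_triangular_def diag_mat_def)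
  ultimately show ?thesis by simp
qed

(* Conjugation by add_row0_mat moves the right eigenvector (1,...,1) to e_0: the first column
   becomes (1,0,...,0) for A and 0 for A - 1 a^T, and the remaining blocks coincide. *)
lemma char_poly_deflation:
  fixes A :: "'a::comm_ring_1 mat"
  assumes A: "A \<in> carrier_mat (Suc N) (Suc N)"
    and rows: "\<And>i. i < Suc N \<Longrightarrow> (\<Sum>j<Suc N. A $$ (i,j)) = 1"
    and a: "(\<Sum>j<Suc N. a j) = 1"
  obtains D where "D \<in> carrier_mat N N" "char_poly A = [:-1, 1:] * char_poly D"
    "char_poly (Matrix.mat (Suc N) (Suc N) (\<lambda>(i,j). A $$ (i,j) - a j)) = [:0, 1:] * char_poly D"
proof -
  define B where "B = Matrix.mat (Suc N) (Suc N) (\<lambda>(i,j). A $$ (i,j) - a j)"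
  define S where "S = add_row0_mat (Suc N) (- 1 :: 'a)"
  define T where "T = add_row0_mat (Suc N) (1 :: 'a)"
  define sub where "sub = (\<lambda>X :: 'a mat. Matrix.mat N N (\<lambda>(i,j). X $$ (Suc i, Suc j)))"
  have B: "B \<in> carrier_mat (Suc N) (Suc N)" by (simp add: B_def)
  have S: "S \<in> carrier_mat (Suc N) (Suc N)" and T: "T \<in> carrier_mat (Suc N) (Suc N)"
    by (simp_all add: S_def T_def)
  have B_rows: "(\<Sum>j<Suc N. B $$ (i,j)) = 0" if "i < Suc N" for i
    using rows[OF that] a that by (simp add: B_def sum_subtractf)
  have SX: "(S * X) $$ (i,j) = X $$ (i,j) - (if i \<noteq> 0 then X $$ (0,j) else 0)"
    if "X \<in> carrier_mat (Suc N) (Suc N)" "i < Suc N" "j < Suc N" for X i j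
    using that unfolding S_def by (simp add: add_row0_mat_mult_index del: index_mult_mat(1))
  have col0: "(S * X * T) $$ (i,0) = (\<Sum>r<Suc N. X $$ (i,r)) - (if i \<noteq> 0 then (\<Sum>r<Suc N. X $$ (0,r)) else 0)"
    if X: "X \<in> carrier_mat (Suc N) (Suc N)" and i: "i < Suc N" for X i
  proof -
    have "(S * X * T) $$ (i,0) = (\<Sum>r<Suc N. (S * X) $$ (i,r))"
      unfolding T_def using X i by (intro mult_add_row0_mat_col0) (auto simp: S_def)
    also have "\<dots> = (\<Sum>r<Suc N. X $$ (i,r) - (if i \<noteq> 0 then X $$ (0,r) else 0))"
      using X i by (intro sum.cong) (auto simp: SX)
    finally show ?thesis by (simp add: sum_subtractf)
  qed
  have "(S * B) $$ (i,j) = (S * A) $$ (i,j)" if "0 < i" "i < Suc N" "j < Suc N" for i j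
    using that A B by (simp add: SX B_def)
  then have rows_eq: "row (S * B) i = row (S * A) i" if "0 < i" "i < Suc N" for i
    using that A B by (intro eq_vecI) (auto simp: S_def)
  have "(S * B * T) $$ (i,j) = (S * A * T) $$ (i,j)" if "0 < i" "i < Suc N" "j < Suc N" for i j
  proof -
    have "(S * B * T) $$ (i,j) = row (S * B) i \<bullet> col T j"
      using that B S T by (intro index_mult_mat(1)) auto
    also have "\<dots> = row (S * A) i \<bullet> col T j"
      using that by (simp add: rows_eq)
    also have "\<dots> = (S * A * T) $$ (i,j)"
      using that A S T by (intro index_mult_mat(1)[symmetric]) auto
    finally show ?thesis .
  qed
  then have sub_eq: "sub (S * B * T) = sub (S * A * T)"
    by (intro eq_matI) (auto simp: sub_def)
  have cp: "char_poly X = [:- (S * X * T) $$ (0,0), 1:] * char_poly (sub (S * X * T))"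
    if X: "X \<in> carrier_mat (Suc N) (Suc N)"
      and X_rows: "\<And>i. i < Suc N \<Longrightarrow> (\<Sum>j<Suc N. X $$ (i,j)) = (\<Sum>j<Suc N. X $$ (0,j))" for X
  proof -
    have col_zero: "(S * X * T) $$ (i,0) = 0" if "0 < i" "i < Suc N" for i
      using col0[OF X that(2)] X_rows[OF that(2)] that(1) by simp
    have "char_poly X = char_poly (S * X * T)"
      unfolding S_def T_def by (rule char_poly_similar[OF similar_mat_add_row0[OF X]])
    also have "\<dots> = [:- (S * X * T) $$ (0,0), 1:] * char_poly (sub (S * X * T))"
      unfolding sub_def
      by (rule char_poly_first_col[OF mult_carrier_mat[OF mult_carrier_mat[OF S X] T] col_zero])
    finally show ?thesis .
  qed
  have A_corner: "(S * A * T) $$ (0,0) = 1"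
    using col0[OF A, of 0] rows[of 0] by simp
  have B_corner: "(S * B * T) $$ (0,0) = 0"
    using col0[OF B, of 0] B_rows[of 0] by simp
  show ?thesis
  proof
    show "sub (S * A * T) \<in> carrier_mat N N" by (simp add: sub_def)
    show "char_poly A = [:-1, 1:] * char_poly (sub (S * A * T))"
      using cp[OF A] rows A_corner by simp
    show "char_poly (Matrix.mat (Suc N) (Suc N) (\<lambda>(i,j). A $$ (i,j) - a j)) = [:0, 1:] * char_poly (sub (S * A * T))"
      using cp[OF B] B_rows B_corner sub_eq unfolding B_def[symmetric] by simp
  qed
qed

lemma poly_cofactor_simple_root:
  fixes p q :: "'a::idom poly"
  assumes simple: "order c p = 1" and p: "p = [:-c, 1:] * q" and q: "q \<noteq> 0"
  shows "poly q c \<noteq> 0"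
proof -
  have "order c p = order c [:-c, 1:] + order c q"
    unfolding p by (rule order_mult) (use q in \<open>metis mult_eq_0_iff pCons_eq_0_iff one_neq_zero\<close>)
  also have "order c [:-c, 1:] = 1"
    using order_power_n_n[of c 1] by simp
  finally have "order c p = 1 + order c q" .
  then show ?thesis using simple q by (simp add: order_root)
qed

lemma deflation_eigenvalue_cases:
  fixes A :: "complex mat"
  assumes A: "A \<in> carrier_mat (Suc N) (Suc N)"
    and rows: "\<And>i. i < Suc N \<Longrightarrow> (\<Sum>j<Suc N. A $$ (i,j)) = 1"
    and a: "(\<Sum>j<Suc N. a j) = 1"
    and simple: "order 1 (char_poly A) = 1"
    and ev: "eigenvalue (Matrix.mat (Suc N) (Suc N) (\<lambda>(i,j). A $$ (i,j) - a j)) \<mu>"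
  shows "\<mu> = 0 \<or> (poly (char_poly A) \<mu> = 0 \<and> \<mu> \<noteq> 1)"
proof -
  obtain D where D: "D \<in> carrier_mat N N" and cpA: "char_poly A = [:-1, 1:] * char_poly D"
    and cpB: "char_poly (Matrix.mat (Suc N) (Suc N) (\<lambda>(i,j). A $$ (i,j) - a j)) = [:0, 1:] * char_poly D"
    using char_poly_deflation[OF A rows a] by blast
  have D1: "poly (char_poly D) 1 \<noteq> 0"
    using poly_cofactor_simple_root[OF simple cpA char_poly_nonzero[OF D]] .
  have "poly (char_poly (Matrix.mat (Suc N) (Suc N) (\<lambda>(i,j). A $$ (i,j) - a j))) \<mu> = 0"
    using ev by (simp add: eigenvalue_root_char_poly[of _ "Suc N"])
  then have "\<mu> = 0 \<or> poly (char_poly D) \<mu> = 0"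
    unfolding cpB by simp
  then show ?thesis
    using D1 unfolding cpA by auto
qed

lemma exists_root_ne_1:
  fixes A :: "complex mat"
  assumes A: "A \<in> carrier_mat (Suc N) (Suc N)" and N: "0 < N"
    and rows: "\<And>i. i < Suc N \<Longrightarrow> (\<Sum>j<Suc N. A $$ (i,j)) = 1"
    and simple: "order 1 (char_poly A) = 1"
  obtains z where "poly (char_poly A) z = 0" "z \<noteq> 1"
proof -
  obtain D where D: "D \<in> carrier_mat N N" and cpA: "char_poly A = [:-1, 1:] * char_poly D"
    using char_poly_deflation[OF A rows rows[OF zero_less_Suc]] by auto
  obtain z where "z \<in> spectrum D"
    using spectrum_non_empty[OF D N] by blast
  then have "poly (char_poly D) z = 0"
    unfolding spectrum_def using eigenvalue_root_char_poly[OF D] by simp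
  moreover have "poly (char_poly D) 1 \<noteq> 0"
    using poly_cofactor_simple_root[OF simple cpA char_poly_nonzero[OF D]] .
  ultimately show ?thesis
    using that[of z] unfolding cpA by auto
qed

lemma second_root_modulus:
  fixes A :: "complex mat"
  assumes A: "A \<in> carrier_mat (Suc N) (Suc N)" and N: "0 < N"
    and rows: "\<And>i. i < Suc N \<Longrightarrow> (\<Sum>j<Suc N. A $$ (i,j)) = 1"
    and simple: "order 1 (char_poly A) = 1"
    and disk: "\<And>z. poly (char_poly A) z = 0 \<Longrightarrow> z \<noteq> 1 \<Longrightarrow> cmod z < 1"
  defines "l2 \<equiv> Max {cmod z | z. poly (char_poly A) z = 0 \<and> z \<noteq> 1}"
  shows "0 \<le> l2" "l2 < 1" "\<And>z. poly (char_poly A) z = 0 \<Longrightarrow> z \<noteq> 1 \<Longrightarrow> cmod z \<le> l2"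
proof -
  let ?R = "{cmod z | z. poly (char_poly A) z = 0 \<and> z \<noteq> 1}"
  have "?R \<subseteq> cmod ` {z. poly (char_poly A) z = 0}" by auto
  then have fin: "finite ?R"
    using poly_roots_finite[OF char_poly_nonzero[OF A]] finite_surj by blast
  obtain z0 where "poly (char_poly A) z0 = 0" "z0 \<noteq> 1"
    using exists_root_ne_1[OF A N rows simple] .
  then have "?R \<noteq> {}" by blast
  then have "l2 \<in> ?R" unfolding l2_def using fin by (rule Max_in[rotated])
  then show "0 \<le> l2" "l2 < 1" using disk by auto
  show "cmod z \<le> l2" if "poly (char_poly A) z = 0" "z \<noteq> 1" for z
    unfolding l2_def using fin that by (intro Max_ge) auto
qed

section \<open>The lifted CoDGraD iteration\<close>

lemma sum_lessThan_double: "(\<Sum>q<2*(n::nat). f q) = (\<Sum>q<n. f q) + (\<Sum>q<n. f (n + q))"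
proof -
  have "(\<Sum>q<n + k. f q) = (\<Sum>q<n. f q) + (\<Sum>q<k. f (n + q))" for k :: nat
    by (induction k) (auto simp: add.assoc)
  from this[of n] show ?thesis by (simp add: mult_2)
qed

lemma pospart_mult_nonneg: "0 \<le> c \<Longrightarrow> pospart (c * t) = c * pospart t"
  unfolding pospart_def by (auto simp: max_def mult_le_0_iff zero_le_mult_iff)

lemma pospart_add_neg: "pospart t + pospart (- t) = \<bar>t\<bar>"
  unfolding pospart_def by auto

lemma A_sde_lower:
  "q < n \<Longrightarrow> A_sde n A p q = codgrad_w n A (p mod n) * pospart (A (p mod n) q)"
  unfolding A_sde_def codgrad_w_def Let_def by (simp add: pospart_mult_nonneg)

lemma A_sde_upper:
  "A_sde n A p (n + q) = codgrad_w n A (p mod n) * pospart (- A (p mod n) q)"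
  using pospart_mult_nonneg[of "codgrad_w n A (p mod n)" "- A (p mod n) q"]
  unfolding A_sde_def codgrad_w_def Let_def by simp

lemma A_sde_row_sum:
  assumes "(\<Sum>j<n. A (p mod n) j * b j) = 1"
  shows "(\<Sum>q<2*n. A_sde n A p q) = 1"
proof -
  let ?i = "p mod n"
  have "\<exists>j<n. A ?i j \<noteq> 0"
    using assms by (metis (no_types, lifting) lessThan_iff mult_zero_left sum.neutral zero_neq_one)
  then have "(\<Sum>j<n. \<bar>A ?i j\<bar>) \<noteq> 0"
    by (subst sum_nonneg_eq_0_iff) auto
  moreover have "(\<Sum>q<2*n. A_sde n A p q) = codgrad_w n A ?i * (\<Sum>j<n. \<bar>A ?i j\<bar>)"
    by (simp add: sum_lessThan_double A_sde_lower A_sde_upper sum_distrib_left[symmetric]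
        sum.distrib[symmetric] distrib_left[symmetric] pospart_add_neg)
  ultimately show ?thesis by (simp add: codgrad_w_def)
qed

lemma A_sde_deflated_spectrum:
  assumes n: "0 < n"
    and rows: "\<And>p. (\<Sum>q<2*n. A_sde n A p q) = 1"
    and simple: "order 1 (char_poly (A_sde_cmat n A)) = 1"
    and disk: "\<forall>z. poly (char_poly (A_sde_cmat n A)) z = 0 \<and> z \<noteq> 1 \<longrightarrow> cmod z < 1"
    and a_sum: "(\<Sum>p<2*n. a p) = 1"
  shows "0 \<le> abs_lambda2 n A" "abs_lambda2 n A < 1"
    and "\<And>\<mu>. eigenvalue (cmat (2*n) (\<lambda>p q. A_sde n A p q - a q)) \<mu> \<Longrightarrow> cmod \<mu> \<le> abs_lambda2 n A"
proof -
  obtain N where N: "2 * n = Suc N" "0 < N" using n by (cases "2 * n") auto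
  let ?A = "A_sde_cmat n A"
  have A: "?A \<in> carrier_mat (Suc N) (Suc N)" using N by (simp add: A_sde_cmat_def)
  have rows': "(\<Sum>j<Suc N. ?A $$ (i,j)) = 1" if "i < Suc N" for i
    using that rows[of i] N(1)[symmetric] by (simp add: A_sde_cmat_def flip: of_real_sum)
  have a_sum': "(\<Sum>j<Suc N. complex_of_real (a j)) = 1"
    using a_sum N(1) by (simp flip: of_real_sum)
  note l2 = second_root_modulus[OF A N(2) rows' simple, folded abs_lambda2_def]
  show "0 \<le> abs_lambda2 n A" "abs_lambda2 n A < 1" using l2 disk by auto
  fix \<mu> assume "eigenvalue (cmat (2*n) (\<lambda>p q. A_sde n A p q - a q)) \<mu>"
  moreover have "cmat (2*n) (\<lambda>p q. A_sde n A p q - a q)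
      = Matrix.mat (Suc N) (Suc N) (\<lambda>(i,j). ?A $$ (i,j) - complex_of_real (a j))"
    using N(1) by (intro eq_matI) (auto simp: cmat_def A_sde_cmat_def)
  ultimately have "\<mu> = 0 \<or> (poly (char_poly ?A) \<mu> = 0 \<and> \<mu> \<noteq> 1)"
    using deflation_eigenvalue_cases[OF A rows' a_sum' simple] by simp
  then show "cmod \<mu> \<le> abs_lambda2 n A" using l2 disk by auto
qed

(* Copy q < n of agent q stands for y_q^+ and copy n + j for y_j^-, so that y = x + alpha * drift. *)
definition codgrad_drift :: "nat \<Rightarrow> (nat \<Rightarrow> 'v \<Rightarrow> 'v) \<Rightarrow> (nat \<Rightarrow> 'v) \<Rightarrow> nat \<Rightarrow> 'v::real_vector" where
  "codgrad_drift n grad y q = (if q < n then - grad q (y q) else grad (q - n) (y (q - n)))"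

lemma norm_codgrad_drift_le:
  assumes "\<forall>i<n. \<forall>y. norm (grad i y) \<le> M" and "q < 2 * n"
  shows "norm (codgrad_drift n grad y q) \<le> M"
  using assms by (auto simp: codgrad_drift_def)

lemma codgrad_lifted_step:
  fixes x :: "nat \<Rightarrow> nat \<Rightarrow> 'v::real_vector"
  assumes n: "0 < n"
    and iter: "\<forall>k. \<forall>i<n. x (Suc k) i =
        (\<Sum>j<n. codgrad_w n A i *\<^sub>R
           (pospart (A i j) *\<^sub>R (x k j - alpha k *\<^sub>R grad j (x k j))
            + pospart (- A i j) *\<^sub>R (x k j + alpha k *\<^sub>R grad j (x k j))))"
  shows "x (Suc k) (p mod n)
       = (\<Sum>q<2*n. A_sde n A p q *\<^sub>R (x k (q mod n) + alpha k *\<^sub>R codgrad_drift n grad (x k) q))"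
proof -
  let ?i = "p mod n" and ?w = "codgrad_w n A (p mod n)"
  have "(\<Sum>q<2*n. A_sde n A p q *\<^sub>R (x k (q mod n) + alpha k *\<^sub>R codgrad_drift n grad (x k) q))
      = (\<Sum>j<n. (?w * pospart (A ?i j)) *\<^sub>R (x k j - alpha k *\<^sub>R grad j (x k j)))
        + (\<Sum>j<n. (?w * pospart (- A ?i j)) *\<^sub>R (x k j + alpha k *\<^sub>R grad j (x k j)))"
    unfolding sum_lessThan_double
    by (intro arg_cong2[where f="(+)"] sum.cong refl)
       (auto simp: A_sde_lower A_sde_upper codgrad_drift_def)
  also have "\<dots> = x (Suc k) ?i"
    using iter n by (simp add: sum.distrib[symmetric] scaleR_add_right mult.assoc)
  finally show ?thesis ..
qed

lemma codgrad_deviation_step: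
  fixes x :: "nat \<Rightarrow> nat \<Rightarrow> 'v::real_vector"
  assumes n: "0 < n"
    and rows: "\<And>p. (\<Sum>q<2*n. A_sde n A p q) = 1"
    and iter: "\<forall>k. \<forall>i<n. x (Suc k) i =
        (\<Sum>j<n. codgrad_w n A i *\<^sub>R
           (pospart (A i j) *\<^sub>R (x k j - alpha k *\<^sub>R grad j (x k j))
            + pospart (- A i j) *\<^sub>R (x k j + alpha k *\<^sub>R grad j (x k j))))"
    and left: "\<forall>q<2*n. (\<Sum>p<2*n. a p * A_sde n A p q) = a q"
    and a_sum: "(\<Sum>p<2*n. a p) = 1"
  defines "xbar \<equiv> \<lambda>k. \<Sum>i<n. (a i + a (n + i)) *\<^sub>R x k i"
  shows "x (Suc k) (p mod n) - xbar (Suc k)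
       = (\<Sum>q<2*n. (A_sde n A p q - a q) *\<^sub>R
            (x k (q mod n) - xbar k + alpha k *\<^sub>R codgrad_drift n grad (x k) q))"
proof -
  let ?Y = "\<lambda>q. x k (q mod n) + alpha k *\<^sub>R codgrad_drift n grad (x k) q"
  have step: "x (Suc k) (r mod n) = (\<Sum>q<2*n. A_sde n A r q *\<^sub>R ?Y q)" for r
    using n iter by (rule codgrad_lifted_step)
  have "xbar (Suc k) = (\<Sum>r<2*n. a r *\<^sub>R x (Suc k) (r mod n))"
    using n by (simp add: xbar_def sum_lessThan_double scaleR_add_left sum.distrib)
  then have "x (Suc k) (p mod n) - xbar (Suc k)
      = (\<Sum>q<2*n. A_sde n A p q *\<^sub>R ?Y q) - (\<Sum>r<2*n. a r *\<^sub>R (\<Sum>q<2*n. A_sde n A r q *\<^sub>R ?Y q))"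
    by (simp only: step)
  also have "\<dots> = (\<Sum>q<2*n. (A_sde n A p q - a q) *\<^sub>R (?Y q - xbar k))"
    using rows left a_sum by (intro stochastic_step_deviation) auto
  finally show ?thesis by (simp add: algebra_simps)
qed

lemma codgrad_deviation_bound:
  fixes x :: "nat \<Rightarrow> nat \<Rightarrow> 'v::real_normed_vector"
  assumes n: "0 < n"
    and rows: "\<And>p. (\<Sum>q<2*n. A_sde n A p q) = 1"
    and iter: "\<forall>k. \<forall>i<n. x (Suc k) i =
        (\<Sum>j<n. codgrad_w n A i *\<^sub>R
           (pospart (A i j) *\<^sub>R (x k j - alpha k *\<^sub>R grad j (x k j))
            + pospart (- A i j) *\<^sub>R (x k j + alpha k *\<^sub>R grad j (x k j))))"
    and left: "\<forall>q<2*n. (\<Sum>p<2*n. a p * A_sde n A p q) = a q"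
    and a_sum: "(\<Sum>p<2*n. a p) = 1"
    and alpha_pos: "\<forall>k. alpha k > 0"
    and grad_bound: "\<forall>i<n. \<forall>y. norm (grad i y) \<le> M"
    and K: "\<And>k p q. p < 2*n \<Longrightarrow> q < 2*n \<Longrightarrow>
              \<bar>mpow (2*n) (\<lambda>p q. A_sde n A p q - a q) k p q\<bar> \<le> K * \<rho> ^ k"
    and i: "i < n"
  defines "xbar \<equiv> \<lambda>k. \<Sum>i<n. (a i + a (n + i)) *\<^sub>R x k i"
  shows "norm (x k i - xbar k)
       \<le> 2 * n * K * M * (\<Sum>l<k. \<rho> ^ (k - l) * alpha l)
         + 2 * n * K * \<rho> ^ k * Max ((\<lambda>i. norm (x 0 i - xbar 0)) ` {..<n})"
proof -
  define Z0 where "Z0 = Max ((\<lambda>i. norm (x 0 i - xbar 0)) ` {..<n})"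
  have "norm (x k (i mod n) - xbar k)
      \<le> real (2 * n) * K * (\<rho> ^ k * Z0 + (\<Sum>l<k. \<rho> ^ (k - l) * (alpha l * M)))"
  proof (rule linear_recursion_norm_bound[where y="\<lambda>k q. x k (q mod n) - xbar k"
        and v="\<lambda>k q. alpha k *\<^sub>R codgrad_drift n grad (x k) q"])
    show "x (Suc k) (p mod n) - xbar (Suc k)
        = (\<Sum>q<2*n. (A_sde n A p q - a q) *\<^sub>R
             (x k (q mod n) - xbar k + alpha k *\<^sub>R codgrad_drift n grad (x k) q))" for k p
      unfolding xbar_def by (rule codgrad_deviation_step[OF n rows iter left a_sum])
    show "norm (alpha l *\<^sub>R codgrad_drift n grad (x l) q) \<le> alpha l * M" if "q < 2*n" for l q
      using norm_codgrad_drift_le[OF grad_bound that] alpha_pos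
      by (simp add: abs_of_pos mult_left_mono less_imp_le)
    show "norm (x 0 (q mod n) - xbar 0) \<le> Z0" for q
      unfolding Z0_def using n by (intro Max_ge) auto
  qed (use K i in auto)
  moreover have "(\<Sum>l<k. \<rho> ^ (k - l) * (alpha l * M)) = M * (\<Sum>l<k. \<rho> ^ (k - l) * alpha l)"
    by (simp add: sum_distrib_left mult_ac)
  ultimately show ?thesis
    using i by (simp add: Z0_def distrib_left mult_ac)
qed

theorem proposition4:
  fixes n m :: nat
    and f :: "nat \<Rightarrow> 'v::euclidean_space \<Rightarrow> real"
    and B A :: "nat \<Rightarrow> nat \<Rightarrow> real"
    and g :: "nat \<Rightarrow> 'v \<Rightarrow> real"
    and grad :: "nat \<Rightarrow> 'v \<Rightarrow> 'v"
    and alpha :: "nat \<Rightarrow> real"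
    and x :: "nat \<Rightarrow> nat \<Rightarrow> 'v"
    and asde :: "nat \<Rightarrow> real"
    and M :: real
  assumes n_pos: "n \<ge> 1" and m_pos: "m \<ge> 1"
    and AB: "\<forall>i<n. \<forall>l<m. (\<Sum>j<n. A i j * B j l) = 1"
    and g_def: "\<forall>i<n. \<forall>y. g i y = (\<Sum>l<m. B i l * f l y)"
    and g_grad: "\<forall>i<n. \<forall>y. (g i has_derivative (\<lambda>h. grad i y \<bullet> h)) (at y)"
    and alpha_pos: "\<forall>k. alpha k > 0"
    and iter: "\<forall>k. \<forall>i<n. x (Suc k) i =
        (\<Sum>j<n. codgrad_w n A i *\<^sub>R
           (pospart (A i j) *\<^sub>R (x k j - alpha k *\<^sub>R grad j (x k j))
            + pospart (- A i j) *\<^sub>R (x k j + alpha k *\<^sub>R grad j (x k j))))"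
    and simple_one: "order 1 (char_poly (A_sde_cmat n A)) = 1"
    and others_in_disk: "\<forall>z. poly (char_poly (A_sde_cmat n A)) z = 0 \<and> z \<noteq> 1 \<longrightarrow> cmod z < 1"
    and asde_left: "\<forall>q<2*n. (\<Sum>p<2*n. asde p * A_sde n A p q) = asde q"
    and asde_sum: "(\<Sum>p<2*n. asde p) = 1"
    and M_pos: "M > 0"
    and grad_bound: "\<forall>i<n. \<forall>y. norm (grad i y) \<le> M"
  shows "\<exists>C1>0. \<forall>k\<ge>1.
     let xbar = (\<lambda>k. \<Sum>i<n. (asde i + asde (n + i)) *\<^sub>R x k i);
         rho = (1 + abs_lambda2 n A) / 2
     in Max ((\<lambda>i. norm (x k i - xbar k)) ` {..<n})
        \<le> C1 * M * (\<Sum>l<k. rho ^ (k - l) * alpha l)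
          + C1 * rho ^ k * Max ((\<lambda>i. norm (x 0 i - xbar 0)) ` {..<n})"
proof -
  define rho where "rho = (1 + abs_lambda2 n A) / 2"
  have n: "0 < n" using n_pos by simp
  have rows: "(\<Sum>q<2*n. A_sde n A p q) = 1" for p
    using AB n m_pos by (intro A_sde_row_sum[where b="\<lambda>j. B j 0"]) simp
  note spectrum = A_sde_deflated_spectrum[OF n rows simple_one others_in_disk asde_sum]
  have rho: "0 < rho" using spectrum(1) unfolding rho_def by simp
  have "cmod \<mu> < rho" if "eigenvalue (cmat (2*n) (\<lambda>p q. A_sde n A p q - asde q)) \<mu>" for \<mu>
    using spectrum(2) spectrum(3)[OF that] unfolding rho_def by simp
  then obtain K where K: "\<And>k p q. p < 2*n \<Longrightarrow> q < 2*n \<Longrightarrow>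
      \<bar>mpow (2*n) (\<lambda>p q. A_sde n A p q - asde q) k p q\<bar> \<le> K * rho ^ k"
    using mpow_exp_bound[OF rho] by blast
  have "0 < 2 * n * K" using K[of 0 0 0] n by simp
  then show ?thesis
    unfolding Let_def rho_def[symmetric] using n
    by (intro exI[of _ "2 * n * K"] conjI allI impI Max.boundedI)
       (auto intro: codgrad_deviation_bound[OF n rows iter asde_left asde_sum alpha_pos grad_bound K])
qed

end
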